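(* For each $t\in\{0,1,\dots,T-1\}$ and $i\in\{1,\dots,N\}$: (i) for every $a\in\mathbb{Z}$, $\Delta G^{N,i}_t(a,k)=G^{N,i}_t(a+1,k)-G^{N,i}_t(a,k)$ is non-increasing in $k\in\mathbb{N}_0$; and (ii) for every $x\in\mathbb{Z}$, $\Delta\tilde V^{N,i}_t(x,k)=\tilde V^{N,i}_t(x+1,k)-\tilde V^{N,i}_t(x,k)$ is non-increasing in $k\in\mathbb{N}_0$.
   Context: Spare parts setting. Fix integers $N\ge1$, $T\ge1$, reals $\alpha_0,\beta_0>0$, and for each $i\in\{1,\dots,N\}$ unit costs $c_v^i,c_h^i,c_b^i>0$ (transportation, holding, backorder) with $c_b^i>c_v^i$. $\mathbb{N}_0=\{0,1,2,\dots\}$, $y^+=\max(y,0)$. For real $r>0$ and $p\in(0,1)$, $NB(r,p)$ is the distribution on $\mathbb{N}_0$ with $P(n)=\frac{\Gamma(n+r)}{\Gamma(r)n!}p^r(1-p)^n$; $NB(0,p)$ is the point mass at $0$. For $t\in\{0,\dots,T\}$ let $p_t=\frac{\beta_0+Nt}{\beta_0+Nt+1}$. At epoch $t$ and statistic $k$ let $Z\sim NB(\alpha_0+k,p_t)$, $K\sim NB((N-1)(\alpha_0+k),p_t)$ independent, and $C_i(a,x,k)=c_v^i(a-x)+c_h^i\mathbb{E}[(a-Z)^+]+c_b^i\mathbb{E}[(Z-a)^+]$. Define $\tilde V^{N,i}_T\equiv0$ and for $t=T-1,\dots,0$, $(x,k)\in\mathbb{Z}\times\mathbb{N}_0$: $\tilde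 V^{N,i}_t(x,k)=\min_{a\in\mathbb{Z},a\ge x}\{C_i(a,x,k)+\mathbb{E}[\tilde V^{N,i}_{t+1}(a-Z,k+Z+K)]\}$. For $t\in\{0,\dots,T-1\}$ let $G^{N,i}_t(a,k)=c_v^ia+c_h^i\mathbb{E}[(a-Z)^+]+c_b^i\mathbb{E}[(Z-a)^+]+\mathbb{E}[\tilde V^{N,i}_{t+1}(a-Z,k+Z+K)]$, so that $\tilde V^{N,i}_t(x,k)=\min_{a\ge x}\{G^{N,i}_t(a,k)-c_v^ix\}$. *)

theory Defs
  imports "HOL-Analysis.Analysis"
begin

definition nb_pmf :: "real \<Rightarrow> real \<Rightarrow> nat \<Rightarrow> real" where
  "nb_pmf r p n =
     (if r = 0 then (if n = 0 then 1 else 0)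
      else Gamma (real n + r) / (Gamma r * fact n) * p powr r * (1 - p) ^ n)"

definition nb_expect :: "real \<Rightarrow> real \<Rightarrow> (nat \<Rightarrow> real) \<Rightarrow> real" where
  "nb_expect r p f = (\<Sum>n. nb_pmf r p n * f n)"

definition p_t :: "nat \<Rightarrow> real \<Rightarrow> nat \<Rightarrow> real" where
  "p_t N beta0 t = (beta0 + real N * real t) / (beta0 + real N * real t + 1)"

definition G_stage ::
  "nat \<Rightarrow> real \<Rightarrow> real \<Rightarrow> real \<Rightarrow> real \<Rightarrow> real \<Rightarrow> nat \<Rightarrow> (int \<Rightarrow> nat \<Rightarrow> real) \<Rightarrow> int \<Rightarrow> nat \<Rightarrow> real"
  where
  "G_stage N alpha0 beta0 cv ch cb t Vnext a k =
     (let p = p_t N beta0 t; r = alpha0 + real k in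
        cv * real_of_int a
      + ch * nb_expect r p (\<lambda>z. max (real_of_int a - real z) 0)
      + cb * nb_expect r p (\<lambda>z. max (real z - real_of_int a) 0)
      + nb_expect r p (\<lambda>z. nb_expect ((real N - 1) * r) p
            (\<lambda>kk. Vnext (a - int z) (k + z + kk))))"

text \<open>Value function with m epochs remaining (epoch t = T - m).\<close>
primrec V_rem ::
  "nat \<Rightarrow> nat \<Rightarrow> real \<Rightarrow> real \<Rightarrow> real \<Rightarrow> real \<Rightarrow> real \<Rightarrow> nat \<Rightarrow> int \<Rightarrow> nat \<Rightarrow> real"
  where
  "V_rem N T alpha0 beta0 cv ch cb 0 x k = 0"
| "V_rem N T alpha0 beta0 cv ch cb (Suc m) x k =
     Inf {G_stage N alpha0 beta0 cv ch cb (T - Suc m) (V_rem N T alpha0 beta0 cv ch cb m) a k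
            - cv * real_of_int x | a. x \<le> a}"

definition Vtil ::
  "nat \<Rightarrow> nat \<Rightarrow> real \<Rightarrow> real \<Rightarrow> (nat \<Rightarrow> real) \<Rightarrow> (nat \<Rightarrow> real) \<Rightarrow> (nat \<Rightarrow> real) \<Rightarrow> nat \<Rightarrow> nat \<Rightarrow> int \<Rightarrow> nat \<Rightarrow> real"
  where
  "Vtil N T alpha0 beta0 cv ch cb i t x k =
     V_rem N T alpha0 beta0 (cv i) (ch i) (cb i) (T - t) x k"

definition Gfun ::
  "nat \<Rightarrow> nat \<Rightarrow> real \<Rightarrow> real \<Rightarrow> (nat \<Rightarrow> real) \<Rightarrow> (nat \<Rightarrow> real) \<Rightarrow> (nat \<Rightarrow> real) \<Rightarrow> nat \<Rightarrow> nat \<Rightarrow> int \<Rightarrow> nat \<Rightarrow> real"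
  where
  "Gfun N T alpha0 beta0 cv ch cb i t a k =
     G_stage N alpha0 beta0 (cv i) (ch i) (cb i) t (Vtil N T alpha0 beta0 cv ch cb i (Suc t)) a k"

end

theory Submission
  imports Defs
begin

text \<open>By backward induction, the value function \<open>V\<^sub>t\<^sub>+\<^sub>1\<close> is nonnegative, of linear
  growth, discretely convex in the stock \<open>x\<close> with increments in \<open>[-c\<^sub>v, D]\<close>, and its
  \<open>x\<close>-increments are nonincreasing in \<open>k\<close>. Then
  \<open>\<Delta>G\<^sub>t(a,k) = c\<^sub>v + c\<^sub>h P(Z \<le> a) - c\<^sub>b P(Z > a) + E \<Delta>V\<^sub>t\<^sub>+\<^sub>1(a - Z, k + Z + K)\<close>
  is a sum of expectations of functions that are nonincreasing both in the demand and in \<open>k\<close>.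
  Raising \<open>k\<close> by one raises the shape parameters of \<open>Z\<close> and \<open>K\<close>; as the likelihood ratio
  \<open>NB(r+1,p)/NB(r,p)\<close> is increasing, this makes demand stochastically larger and can only
  lower such expectations. Finally \<open>G\<^sub>t\<close> is convex in \<open>a\<close> and, by Markov's inequality,
  eventually increasing, so it has a smallest minimiser on \<open>[x, \<infinity>)\<close> and
  \<open>\<Delta>V\<^sub>t(x,k) = max(\<Delta>G\<^sub>t(x,k), 0) - c\<^sub>v\<close>, which inherits both properties and closes the
  induction.\<close>

section \<open>The negative binomial distribution\<close>

lemma nb_pmf_pochhammer:
  assumes "r > 0"
  shows "nb_pmf r p n = pochhammer r n / fact n * p powr r * (1 - p) ^ n"
proof -
  have "r \<notin> \<int>\<^sub>\<le>\<^sub>0" using assms by (auto elim!: nonpos_Ints_cases)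
  hence "pochhammer r n = Gamma (r + of_nat n) / Gamma r" by (rule pochhammer_Gamma)
  moreover have "Gamma r \<noteq> 0" using Gamma_real_pos[OF assms] by simp
  ultimately show ?thesis using assms by (simp add: nb_pmf_def add.commute)
qed

lemma nb_pmf_nonneg:
  assumes "r \<ge> 0" "0 < p" "p < 1"
  shows "nb_pmf r p n \<ge> 0"
proof (cases "r = 0")
  case True then show ?thesis by (simp add: nb_pmf_def)
next
  case False
  with assms show ?thesis by (simp add: nb_pmf_pochhammer pochhammer_pos less_imp_le)
qed

lemma nb_pmf_zero_shape: "nb_pmf 0 p n = (if n = 0 then 1 else 0)"
  by (simp add: nb_pmf_def)

lemma nb_pmf_sums_1:
  assumes "r \<ge> 0" "0 < p" "p < 1"
  shows "(\<lambda>n. nb_pmf r p n) sums 1"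
proof (cases "r = 0")
  case True
  then show ?thesis using sums_single[of 0 "\<lambda>_. 1::real"] by (simp add: nb_pmf_zero_shape)
next
  case False
  hence r: "r > 0" using assms by simp
  have "\<bar>-(1-p)\<bar> < 1" using assms by simp
  from gen_binomial_real[OF this, of "-r"]
  have "(\<lambda>n. ((-r) gchoose n) * (-(1-p))^n) sums (p powr (-r))" by simp
  also have "(\<lambda>n. ((-r) gchoose n) * (-(1-p))^n) = (\<lambda>n. pochhammer r n / fact n * (1-p)^n)"
    by (simp add: fun_eq_iff gbinomial_pochhammer power_mult_distrib[symmetric])
  finally have "(\<lambda>n. pochhammer r n / fact n * (1-p)^n * p powr r) sums (p powr (-r) * p powr r)"
    by (rule sums_mult2)
  also have "p powr (-r) * p powr r = 1" using assms by (simp add: powr_minus)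
  finally show ?thesis using r by (simp add: nb_pmf_pochhammer mult_ac)
qed

lemma nb_pmf_shape_Suc:
  assumes "r > 0" "p > 0"
  shows "nb_pmf (r + 1) p n = nb_pmf r p n * (p * (r + real n) / r)"
proof -
  have "r * pochhammer (r + 1) n = (r + real n) * pochhammer r n"
    using pochhammer_rec[of r n] pochhammer_rec'[of r n] by simp
  hence "pochhammer (r + 1) n = (r + real n) * pochhammer r n / r"
    using assms by (simp add: field_simps)
  moreover have "r + 1 > 0" using assms by simp
  ultimately show ?thesis using assms
    by (simp only: nb_pmf_pochhammer powr_add) (simp add: field_simps)
qed

lemma nb_pmf_size_bias:
  assumes "r > 0" "p > 0"
  shows "real (Suc m) * nb_pmf r p (Suc m) = r * (1 - p) / p * nb_pmf (r + 1) p m"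
proof -
  have "real (Suc m) * nb_pmf r p (Suc m)
      = r * pochhammer (r + 1) m / fact m * p powr r * ((1 - p) * (1 - p) ^ m)"
    using assms by (simp only: nb_pmf_pochhammer pochhammer_rec fact_Suc power_Suc)
      (simp add: field_simps del: of_nat_Suc)
  also have "\<dots> = r * (1 - p) / p * nb_pmf (r + 1) p m"
    using assms by (simp add: nb_pmf_pochhammer powr_add field_simps)
  finally show ?thesis .
qed

lemma nb_pmf_mean_sums:
  assumes "r \<ge> 0" "0 < p" "p < 1"
  shows "(\<lambda>n. real n * nb_pmf r p n) sums (r * (1 - p) / p)"
proof (cases "r = 0")
  case True
  have "(\<lambda>n. real n * nb_pmf 0 p n) = (\<lambda>n. 0)" by (simp add: fun_eq_iff nb_pmf_zero_shape)
  then show ?thesis using True by simp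
next
  case False
  hence r: "r > 0" using assms by simp
  have "(\<lambda>m. r * (1 - p) / p * nb_pmf (r + 1) p m) sums (r * (1 - p) / p * 1)"
    by (rule sums_mult) (use nb_pmf_sums_1[of "r + 1" p] assms in simp)
  hence "(\<lambda>m. real (Suc m) * nb_pmf r p (Suc m)) sums (r * (1 - p) / p)"
    using nb_pmf_size_bias[OF r assms(2)] by simp
  then show ?thesis by (subst (asm) sums_Suc_iff) simp
qed

section \<open>Expectations of linearly bounded functions\<close>

definition linearly_bounded :: "(nat \<Rightarrow> real) \<Rightarrow> bool" where
  "linearly_bounded f \<longleftrightarrow> (\<exists>A B. \<forall>n. \<bar>f n\<bar> \<le> A + B * real n)"

lemma linearly_boundedI: "(\<And>n. \<bar>f n\<bar> \<le> A + B * real n) \<Longrightarrow> linearly_bounded f"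
  unfolding linearly_bounded_def by blast

lemma linearly_bounded_const [simp]: "linearly_bounded (\<lambda>n. c)"
  by (rule linearly_boundedI[of _ "\<bar>c\<bar>" 0]) simp

lemma linearly_bounded_of_nat [simp]: "linearly_bounded (\<lambda>n. real n)"
  by (rule linearly_boundedI[of _ 0 1]) simp

lemma linearly_bounded_add:
  assumes "linearly_bounded f" "linearly_bounded g"
  shows "linearly_bounded (\<lambda>n. f n + g n)"
proof -
  obtain A B A' B' where "\<And>n. \<bar>f n\<bar> \<le> A + B * real n" "\<And>n. \<bar>g n\<bar> \<le> A' + B' * real n"
    using assms unfolding linearly_bounded_def by blast
  then have "\<bar>f n + g n\<bar> \<le> (A + A') + (B + B') * real n" for n
    by (smt (verit, best) distrib_right)
  then show ?thesis by (rule linearly_boundedI)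
qed

lemma linearly_bounded_cmult:
  assumes "linearly_bounded f"
  shows "linearly_bounded (\<lambda>n. c * f n)"
proof -
  obtain A B where AB: "\<And>n. \<bar>f n\<bar> \<le> A + B * real n"
    using assms unfolding linearly_bounded_def by blast
  have "\<bar>c * f n\<bar> \<le> \<bar>c\<bar> * A + (\<bar>c\<bar> * B) * real n" for n
    using mult_left_mono[OF AB[of n] abs_ge_zero[of c]] by (simp add: abs_mult algebra_simps)
  then show ?thesis by (rule linearly_boundedI)
qed

lemma linearly_bounded_diff:
  "linearly_bounded f \<Longrightarrow> linearly_bounded g \<Longrightarrow> linearly_bounded (\<lambda>n. f n - g n)"
  using linearly_bounded_add[of f "\<lambda>n. (-1) * g n"] linearly_bounded_cmult[of g "-1"] by simp

lemma linearly_bounded_overage [simp]: "linearly_bounded (\<lambda>z. max (real_of_int a - real z) 0)"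
  by (rule linearly_boundedI[of _ "\<bar>real_of_int a\<bar>" 1]) simp

lemma linearly_bounded_shortage [simp]: "linearly_bounded (\<lambda>z. max (real z - real_of_int a) 0)"
  by (rule linearly_boundedI[of _ "\<bar>real_of_int a\<bar>" 1]) simp

lemma linearly_bounded_indicator [simp]: "linearly_bounded (\<lambda>z. if P z then c else 0)"
  by (rule linearly_boundedI[of _ "\<bar>c\<bar>" 0]) simp

lemma nb_expect_zero_shape: "nb_expect 0 p f = f 0"
proof -
  have "(\<lambda>n. nb_pmf 0 p n * f n) = (\<lambda>n. if n = 0 then f n else 0)"
    by (simp add: fun_eq_iff nb_pmf_zero_shape)
  then show ?thesis using sums_single[of 0 f] by (simp add: nb_expect_def sums_iff)
qed

locale nb_param =
  fixes p :: real
  assumes p_pos: "0 < p" and p_less_1: "p < 1"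
begin

lemma summable_nb_expect:
  assumes "r \<ge> 0" "linearly_bounded f"
  shows "summable (\<lambda>n. nb_pmf r p n * f n)"
proof -
  obtain A B where AB: "\<And>n. \<bar>f n\<bar> \<le> A + B * real n"
    using assms(2) unfolding linearly_bounded_def by blast
  have "summable (\<lambda>n. A * nb_pmf r p n + B * (real n * nb_pmf r p n))"
    using nb_pmf_sums_1[OF assms(1) p_pos p_less_1] nb_pmf_mean_sums[OF assms(1) p_pos p_less_1]
    by (intro summable_add summable_mult) (auto simp: sums_iff)
  moreover have "norm (nb_pmf r p n * f n) \<le> A * nb_pmf r p n + B * (real n * nb_pmf r p n)" for n
    using mult_left_mono[OF AB[of n] nb_pmf_nonneg[OF assms(1) p_pos p_less_1, of n]]
    by (simp add: abs_mult nb_pmf_nonneg[OF assms(1) p_pos p_less_1] algebra_simps)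
  ultimately show ?thesis by (rule summable_comparison_test')
qed

lemma nb_expect_sums:
  "r \<ge> 0 \<Longrightarrow> linearly_bounded f \<Longrightarrow> (\<lambda>n. nb_pmf r p n * f n) sums nb_expect r p f"
  unfolding nb_expect_def by (rule summable_sums[OF summable_nb_expect])

lemma nb_expect_const: "r \<ge> 0 \<Longrightarrow> nb_expect r p (\<lambda>n. c) = c"
  unfolding nb_expect_def using sums_mult2[OF nb_pmf_sums_1[OF _ p_pos p_less_1], of r c]
  by (simp add: sums_iff)

lemma nb_expect_of_nat: "r \<ge> 0 \<Longrightarrow> nb_expect r p (\<lambda>n. real n) = r * (1 - p) / p"
  unfolding nb_expect_def using nb_pmf_mean_sums[OF _ p_pos p_less_1, of r]
  by (simp add: sums_iff mult.commute)

lemma nb_expect_add: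
  "r \<ge> 0 \<Longrightarrow> linearly_bounded f \<Longrightarrow> linearly_bounded g \<Longrightarrow>
   nb_expect r p (\<lambda>n. f n + g n) = nb_expect r p f + nb_expect r p g"
  using sums_add[OF nb_expect_sums[of r f] nb_expect_sums[of r g]] unfolding nb_expect_def
  by (simp add: sums_iff distrib_left)

lemma nb_expect_diff:
  "r \<ge> 0 \<Longrightarrow> linearly_bounded f \<Longrightarrow> linearly_bounded g \<Longrightarrow>
   nb_expect r p (\<lambda>n. f n - g n) = nb_expect r p f - nb_expect r p g"
  using sums_diff[OF nb_expect_sums[of r f] nb_expect_sums[of r g]] unfolding nb_expect_def
  by (simp add: sums_iff right_diff_distrib)

lemma nb_expect_cmult:
  "r \<ge> 0 \<Longrightarrow> linearly_bounded f \<Longrightarrow> nb_expect r p (\<lambda>n. c * f n) = c * nb_expect r p f"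
  unfolding nb_expect_def using suminf_mult[OF summable_nb_expect[of r f], of c]
  by (simp add: mult_ac)

lemma nb_expect_mono:
  "r \<ge> 0 \<Longrightarrow> linearly_bounded f \<Longrightarrow> linearly_bounded g \<Longrightarrow> (\<And>n. f n \<le> g n) \<Longrightarrow>
   nb_expect r p f \<le> nb_expect r p g"
  unfolding nb_expect_def
  by (intro suminf_le summable_nb_expect mult_left_mono nb_pmf_nonneg p_pos p_less_1) auto

lemma nb_expect_le_const:
  "r \<ge> 0 \<Longrightarrow> linearly_bounded f \<Longrightarrow> (\<And>n. f n \<le> c) \<Longrightarrow> nb_expect r p f \<le> c"
  using nb_expect_mono[of r f "\<lambda>_. c"] nb_expect_const[of r c] by simp

lemma nb_expect_ge_const:
  "r \<ge> 0 \<Longrightarrow> linearly_bounded f \<Longrightarrow> (\<And>n. c \<le> f n) \<Longrightarrow> c \<le> nb_expect r p f"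
  using nb_expect_mono[of r "\<lambda>_. c" f] nb_expect_const[of r c] by simp

lemma nb_expect_le_linear:
  assumes "r \<ge> 0" "linearly_bounded f" "\<And>n. f n \<le> A + B * real n"
  shows "nb_expect r p f \<le> A + B * (r * (1 - p) / p)"
proof -
  have "nb_expect r p f \<le> nb_expect r p (\<lambda>n. A + B * real n)"
    by (rule nb_expect_mono[OF assms(1,2) _ assms(3)])
      (intro linearly_bounded_add linearly_bounded_cmult linearly_bounded_const linearly_bounded_of_nat)
  also have "\<dots> = A + B * (r * (1 - p) / p)"
    using assms(1) by (simp add: nb_expect_add linearly_bounded_cmult nb_expect_const
        nb_expect_cmult nb_expect_of_nat)
  finally show ?thesis .
qed

lemma nb_expect_tail_bound:
  assumes "r \<ge> 0" "a \<ge> 0"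
  shows "- (r * (1 - p) / p) / (real_of_int a + 1) \<le> nb_expect r p (\<lambda>z. if a < int z then -1 else 0)"
proof -
  have pos: "real_of_int a + 1 > 0" using assms(2) by simp
  have "nb_expect r p (\<lambda>z. (- 1 / (real_of_int a + 1)) * real z)
      \<le> nb_expect r p (\<lambda>z. if a < int z then -1 else 0)"
  proof (rule nb_expect_mono[OF assms(1)])
    show "(- 1 / (real_of_int a + 1)) * real z \<le> (if a < int z then -1 else 0)" for z
    proof (cases "a < int z")
      case True
      hence "real_of_int a + 1 \<le> real z" by linarith
      then show ?thesis using True pos by (simp add: field_simps)
    qed (use pos in \<open>simp add: field_simps\<close>)
  qed (rule linearly_bounded_cmult[OF linearly_bounded_of_nat], simp)
  moreover have "nb_expect r p (\<lambda>z. (- 1 / (real_of_int a + 1)) * real z)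
      = - (r * (1 - p) / p) / (real_of_int a + 1)"
    using assms(1) by (simp only: nb_expect_cmult linearly_bounded_of_nat nb_expect_of_nat) simp
  ultimately show ?thesis by simp
qed

text \<open>The likelihood ratio of \<open>NB(r+1,p)\<close> to \<open>NB(r,p)\<close> at \<open>n\<close> is \<open>p (r + n) / r\<close>, which
  crosses \<open>1\<close> exactly once, at \<open>n = r (1-p)/p\<close>.\<close>
lemma nb_pmf_shape_Suc_crossing:
  assumes r: "r > 0" and h: "antimono h"
  defines "c \<equiv> h (nat \<lceil>r * (1 - p) / p\<rceil>)"
  shows "(nb_pmf (r + 1) p n - nb_pmf r p n) * (h n - c) \<le> 0"
proof -
  have ratio: "nb_pmf (r + 1) p n - nb_pmf r p n = nb_pmf r p n * ((p * (r + real n) - r) / r)"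
    using r by (simp only: nb_pmf_shape_Suc[OF r p_pos]) (simp add: field_simps)
  have "(p * (r + real n) - r) * (h n - c) \<le> 0"
  proof (cases "real n < r * (1 - p) / p")
    case True
    hence "p * (r + real n) - r < 0" using p_pos by (simp add: field_simps)
    moreover have "h n \<ge> c"
    proof -
      have "n \<le> nat \<lceil>r * (1 - p) / p\<rceil>" using True by linarith
      then show ?thesis using h unfolding c_def antimono_def by blast
    qed
    ultimately show ?thesis by (simp add: mult_nonpos_nonneg)
  next
    case False
    hence "p * (r + real n) - r \<ge> 0" using p_pos by (simp add: field_simps)
    moreover have "h n \<le> c"
      using h False unfolding c_def antimono_def by (simp add: nat_ceiling_le_eq)
    ultimately show ?thesis by (simp add: mult_nonneg_nonpos)
  qed
  then have "nb_pmf r p n * ((p * (r + real n) - r) * (h n - c)) / r \<le> 0"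
    using r nb_pmf_nonneg[of r p n] p_pos p_less_1 by (simp add: mult_nonneg_nonpos divide_nonpos_pos)
  then show ?thesis unfolding ratio by (simp add: mult_ac)
qed

lemma nb_expect_shape_Suc_le:
  assumes r: "r \<ge> 0" and h: "antimono h" "linearly_bounded h"
  shows "nb_expect (r + 1) p h \<le> nb_expect r p h"
proof (cases "r = 0")
  case True
  have "nb_expect 1 p h \<le> h 0"
    by (rule nb_expect_le_const[OF _ h(2)]) (use h(1) in \<open>auto simp: antimono_def\<close>)
  then show ?thesis using True by (simp add: nb_expect_zero_shape)
next
  case False
  \<comment> \<open>Both distributions have total mass \<open>1\<close>, so \<open>h\<close> may be recentred at the crossing point.\<close>
  define c where "c = h (nat \<lceil>r * (1 - p) / p\<rceil>)"
  have r1: "r + 1 \<ge> 0" using r by simp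
  have hc: "linearly_bounded (\<lambda>n. h n - c)" using h(2) by (intro linearly_bounded_diff) auto
  have "nb_expect (r + 1) p h - nb_expect r p h =
        nb_expect (r + 1) p (\<lambda>n. h n - c) - nb_expect r p (\<lambda>n. h n - c)"
    using r r1 h(2) by (simp add: nb_expect_diff nb_expect_const)
  also have "\<dots> = (\<Sum>n. (nb_pmf (r + 1) p n - nb_pmf r p n) * (h n - c))"
    unfolding nb_expect_def left_diff_distrib
    using summable_nb_expect[OF r1 hc] summable_nb_expect[OF r hc] by (rule suminf_diff)
  also have "\<dots> \<le> 0"
  proof (rule suminf_le[where g="\<lambda>_. 0", simplified])
    show "(nb_pmf (r + 1) p n - nb_pmf r p n) * (h n - c) \<le> 0" for n
      unfolding c_def using False r h(1) by (intro nb_pmf_shape_Suc_crossing) auto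
    show "summable (\<lambda>n. (nb_pmf (r + 1) p n - nb_pmf r p n) * (h n - c))"
      unfolding left_diff_distrib
      by (intro summable_diff summable_nb_expect[OF _ hc]) (use r in simp_all)
  qed
  finally show ?thesis by simp
qed

lemma nb_expect_shape_add_le:
  assumes "r \<ge> 0" "antimono h" "linearly_bounded h"
  shows "nb_expect (r + real j) p h \<le> nb_expect r p h"
proof (induction j)
  case (Suc j)
  have "nb_expect (r + real (Suc j)) p h = nb_expect ((r + real j) + 1) p h" by (simp add: add_ac)
  also have "\<dots> \<le> nb_expect (r + real j) p h"
    using assms by (intro nb_expect_shape_Suc_le) auto
  finally show ?case using Suc.IH by simp
qed simp

end

section \<open>Minimising a discretely convex function\<close>

lemma int_step_mono:
  fixes d :: "int \<Rightarrow> 'a::preorder"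
  assumes "\<And>a. d a \<le> d (a + 1)" "a \<le> b"
  shows "d a \<le> d b"
  using assms(2) by (induction b rule: int_ge_induct) (auto intro: order_trans assms(1))

locale int_convex_coercive =
  fixes g :: "int \<Rightarrow> real"
  assumes increment_mono: "\<And>a. g (a + 1) - g a \<le> g (a + 2) - g (a + 1)"
    and increment_eventually_nonneg: "\<And>x. \<exists>a\<ge>x. 0 \<le> g (a + 1) - g a"
begin

lemma increment_le: "a \<le> b \<Longrightarrow> g (a + 1) - g a \<le> g (b + 1) - g b"
  using int_step_mono[of "\<lambda>a. g (a + 1) - g a" a b] increment_mono by (simp add: add.assoc)

text \<open>The smallest minimiser of \<open>g\<close> on \<open>[x, \<infinity>)\<close>.\<close>
definition min_from :: "int \<Rightarrow> int" where
  "min_from x = x + int (LEAST j. 0 \<le> g (x + int j + 1) - g (x + int j))"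

lemma min_from_exists: "\<exists>j. 0 \<le> g (x + int j + 1) - g (x + int j)"
proof -
  obtain a where "a \<ge> x" "0 \<le> g (a + 1) - g a" using increment_eventually_nonneg by blast
  then show ?thesis by (intro exI[of _ "nat (a - x)"]) simp
qed

lemma min_from_ge: "x \<le> min_from x"
  unfolding min_from_def by simp

lemma increment_min_from_nonneg: "0 \<le> g (min_from x + 1) - g (min_from x)"
  unfolding min_from_def by (rule LeastI_ex[OF min_from_exists])

lemma increment_before_min_from:
  assumes "x \<le> a" "a < min_from x"
  shows "g (a + 1) - g a < 0"
proof -
  have "nat (a - x) < (LEAST j. 0 \<le> g (x + int j + 1) - g (x + int j))"
    using assms unfolding min_from_def by linarith
  from not_less_Least[OF this] show ?thesis using assms(1) by simp
qed

lemma min_from_le: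
  assumes "x \<le> a"
  shows "g (min_from x) \<le> g a"
proof (cases "min_from x \<le> a")
  case True
  then show ?thesis
  proof (induction a rule: int_ge_induct)
    case (step a)
    have "0 \<le> g (a + 1) - g a"
      using increment_min_from_nonneg[of x] increment_le[OF step.hyps] by linarith
    with step.IH show ?case by simp
  qed simp
next
  case False
  have "x \<le> a \<longrightarrow> g (min_from x) \<le> g a" if "a \<le> min_from x" for a
    using that
  proof (induction a rule: int_le_induct)
    case (step a)
    show ?case
      using step increment_before_min_from[of x "a - 1"] by force
  qed simp
  then show ?thesis using False assms by simp
qed

lemma Inf_from_eq: "Inf {g a - c | a. x \<le> a} = g (min_from x) - c"
proof (rule cInf_eq_minimum)
  show "g (min_from x) - c \<in> {g a - c | a. x \<le> a}" using min_from_ge by blast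
qed (auto intro: min_from_le)

lemma min_from_self: "0 \<le> g (x + 1) - g x \<Longrightarrow> min_from x = x"
  unfolding min_from_def by (subst Least_eq_0) simp_all

lemma min_from_Suc:
  assumes "g (x + 1) - g x < 0"
  shows "min_from x = min_from (x + 1)"
proof -
  define P where "P y j \<longleftrightarrow> 0 \<le> g (y + int j + 1) - g (y + int j)" for y j
  obtain j where "P x j" using min_from_exists unfolding P_def by blast
  moreover have "\<not> P x 0" using assms unfolding P_def by simp
  moreover have "P x (Suc m) = P (x + 1) m" for m unfolding P_def by (simp add: add_ac)
  ultimately have "(LEAST j. P x j) = Suc (LEAST j. P (x + 1) j)"
    using Least_Suc[of "P x" j] by simp
  then show ?thesis unfolding min_from_def P_def by simp
qed

lemma min_from_increment:
  "g (min_from (x + 1)) - g (min_from x) = max (g (x + 1) - g x) 0"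
proof (cases "0 \<le> g (x + 1) - g x")
  case True
  moreover have "0 \<le> g (x + 1 + 1) - g (x + 1)" using True increment_le[of x "x + 1"] by simp
  ultimately show ?thesis by (simp add: min_from_self)
next
  case False
  then show ?thesis by (simp add: min_from_Suc)
qed

end

section \<open>One step of the dynamic program\<close>

lemma overage_increment:
  "max (real_of_int (a + 1) - real z) 0 - max (real_of_int a - real z) 0
   = (if int z \<le> a then 1 else 0)"
  using of_int_le_iff[of "int z" a] of_int_le_iff[of "a + 1" "int z"] by auto

lemma shortage_increment:
  "max (real z - real_of_int (a + 1)) 0 - max (real z - real_of_int a) 0
   = (if a < int z then -1 else 0)"
  using of_int_le_iff[of "int z" a] of_int_le_iff[of "a + 1" "int z"] by auto

definition regular_value :: "real \<Rightarrow> (int \<Rightarrow> nat \<Rightarrow> real) \<Rightarrow> bool" where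
  "regular_value cv W \<longleftrightarrow>
     (\<forall>x k. 0 \<le> W x k)
   \<and> (\<exists>A B C. A \<ge> 0 \<and> B \<ge> 0 \<and> C \<ge> 0 \<and> (\<forall>x k. W x k \<le> A + B * \<bar>real_of_int x\<bar> + C * real k))
   \<and> (\<exists>D \<ge> 0. \<forall>x k. -cv \<le> W (x + 1) k - W x k \<and> W (x + 1) k - W x k \<le> D)
   \<and> (\<forall>x k. W (x + 1) k - W x k \<le> W (x + 2) k - W (x + 1) k)
   \<and> (\<forall>x k. W (x + 1) (Suc k) - W x (Suc k) \<le> W (x + 1) k - W x k)"

locale bellman_step = nb_param p for p +
  fixes N :: nat and alpha cv ch cb A B C D :: real and W :: "int \<Rightarrow> nat \<Rightarrow> real"
  assumes N_ge_1: "N \<ge> 1" and alpha_pos: "alpha > 0"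
    and cv_pos: "cv > 0" and ch_pos: "ch > 0" and cb_pos: "cb > 0"
    and bounds_nonneg: "A \<ge> 0" "B \<ge> 0" "C \<ge> 0" "D \<ge> 0"
    and W_nonneg: "\<And>x k. 0 \<le> W x k"
    and W_growth: "\<And>x k. W x k \<le> A + B * \<bar>real_of_int x\<bar> + C * real k"
    and W_increment_ge: "\<And>x k. -cv \<le> W (x + 1) k - W x k"
    and W_increment_le: "\<And>x k. W (x + 1) k - W x k \<le> D"
    and W_convex: "\<And>x k. W (x + 1) k - W x k \<le> W (x + 2) k - W (x + 1) k"
    and W_increment_antimono: "\<And>x k. W (x + 1) (Suc k) - W x (Suc k) \<le> W (x + 1) k - W x k"
begin

definition "shape k = alpha + real k"
definition "shape_others k = (real N - 1) * shape k"
definition "odds = (1 - p) / p"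
definition "dW x k = W (x + 1) k - W x k"

text \<open>Given the own demand \<open>z\<close>, average over the others' demand \<open>K\<close>.\<close>
definition "W_after a k z = nb_expect (shape_others k) p (\<lambda>n. W (a - int z) (k + z + n))"
definition "dW_after a k z = nb_expect (shape_others k) p (\<lambda>n. dW (a - int z) (k + z + n))"

definition "G a k = cv * real_of_int a
    + ch * nb_expect (shape k) p (\<lambda>z. max (real_of_int a - real z) 0)
    + cb * nb_expect (shape k) p (\<lambda>z. max (real z - real_of_int a) 0)
    + nb_expect (shape k) p (W_after a k)"

definition "dG a k = cv
    + ch * nb_expect (shape k) p (\<lambda>z. if int z \<le> a then 1 else 0)
    + cb * nb_expect (shape k) p (\<lambda>z. if a < int z then -1 else 0)
    + nb_expect (shape k) p (dW_after a k)"

definition "V x k = Inf {G a k - cv * real_of_int x | a. x \<le> a}"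

lemma shape_nonneg: "shape k \<ge> 0"
  using alpha_pos unfolding shape_def by simp

lemma shape_Suc: "shape (Suc k) = shape k + 1"
  unfolding shape_def by simp

lemma shape_others_nonneg: "shape_others k \<ge> 0"
  using N_ge_1 shape_nonneg unfolding shape_others_def by simp

lemma shape_others_Suc: "shape_others (Suc k) = shape_others k + real (N - 1)"
  using N_ge_1 unfolding shape_others_def shape_def by (simp add: of_nat_diff algebra_simps)

lemma odds_nonneg: "odds \<ge> 0"
  using p_pos p_less_1 unfolding odds_def by simp

lemma W_shifted_le:
  "W (a - int z) (k + z + n)
   \<le> (A + B * \<bar>real_of_int a\<bar> + (B + C) * real z + C * real k) + C * real n"
proof -
  have "W (a - int z) (k + z + n) \<le> A + B * \<bar>real_of_int (a - int z)\<bar> + C * real (k + z + n)"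
    by (rule W_growth)
  also have "\<dots> \<le> A + B * (\<bar>real_of_int a\<bar> + real z) + C * real (k + z + n)"
    using mult_left_mono[of "\<bar>real_of_int (a - int z)\<bar>" _ B] bounds_nonneg by simp
  finally show ?thesis by (simp add: algebra_simps)
qed

lemma W_shifted_linearly_bounded: "linearly_bounded (\<lambda>n. W (a - int z) (k + z + n))"
  using W_shifted_le W_nonneg by (intro linearly_boundedI) simp

lemma W_after_nonneg: "0 \<le> W_after a k z"
  unfolding W_after_def
  by (rule nb_expect_ge_const[OF shape_others_nonneg W_shifted_linearly_bounded W_nonneg])

lemma W_after_le:
  "W_after a k z \<le> (A + B * \<bar>real_of_int a\<bar> + C * real k + C * shape_others k * odds) + (B + C) * real z"
proof -
  have "W_after a k z \<le> (A + B * \<bar>real_of_int a\<bar> + (B + C) * real z + C * real k)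
      + C * (shape_others k * (1 - p) / p)"
    unfolding W_after_def
    by (rule nb_expect_le_linear[OF shape_others_nonneg W_shifted_linearly_bounded W_shifted_le])
  then show ?thesis unfolding odds_def by (simp add: algebra_simps)
qed

lemma W_after_linearly_bounded: "linearly_bounded (W_after a k)"
  using W_after_le W_after_nonneg by (intro linearly_boundedI) simp

lemma dW_bound: "\<bar>dW x k\<bar> \<le> cv + D"
  using W_increment_ge[of x k] W_increment_le[of x k] cv_pos bounds_nonneg unfolding dW_def by simp

lemma dW_mono: "x \<le> y \<Longrightarrow> dW x k \<le> dW y k"
  using int_step_mono[of "\<lambda>x. dW x k" x y] W_convex unfolding dW_def by (simp add: add.assoc)

lemma dW_antimono: "j \<le> l \<Longrightarrow> dW x l \<le> dW x j"
  using decseq_SucI[of "\<lambda>k. dW x k"] W_increment_antimono unfolding antimono_def dW_def by blast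

lemma dW_shifted_linearly_bounded: "linearly_bounded (\<lambda>n. dW (a - int z) (k + z + n))"
  using dW_bound by (intro linearly_boundedI[of _ "cv + D" 0]) simp

lemma dW_after_ge: "-cv \<le> dW_after a k z"
  unfolding dW_after_def
  by (rule nb_expect_ge_const[OF shape_others_nonneg dW_shifted_linearly_bounded])
    (simp add: dW_def W_increment_ge)

lemma dW_after_le: "dW_after a k z \<le> D"
  unfolding dW_after_def
  by (rule nb_expect_le_const[OF shape_others_nonneg dW_shifted_linearly_bounded])
    (simp add: dW_def W_increment_le)

lemma dW_after_linearly_bounded: "linearly_bounded (dW_after a k)"
proof (rule linearly_boundedI[of _ "cv + D" 0])
  show "\<bar>dW_after a k z\<bar> \<le> cv + D + 0 * real z" for z
    using dW_after_ge[of a k z] dW_after_le[of a k z] cv_pos bounds_nonneg by simp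
qed

lemma W_after_increment: "W_after (a + 1) k z - W_after a k z = dW_after a k z"
proof -
  have shift: "a + 1 - int z = (a - int z) + 1" by simp
  show ?thesis
    unfolding W_after_def dW_after_def dW_def
    using nb_expect_diff[OF shape_others_nonneg W_shifted_linearly_bounded W_shifted_linearly_bounded,
        of k "a + 1" z k a z k]
    by (simp add: shift)
qed

lemma G_increment: "G (a + 1) k - G a k = dG a k"
proof -
  have s: "shape k \<ge> 0" by (rule shape_nonneg)
  have "G (a + 1) k - G a k = cv
     + ch * (nb_expect (shape k) p (\<lambda>z. max (real_of_int (a + 1) - real z) 0)
             - nb_expect (shape k) p (\<lambda>z. max (real_of_int a - real z) 0))
     + cb * (nb_expect (shape k) p (\<lambda>z. max (real z - real_of_int (a + 1)) 0)
             - nb_expect (shape k) p (\<lambda>z. max (real z - real_of_int a) 0))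
     + (nb_expect (shape k) p (W_after (a + 1) k) - nb_expect (shape k) p (W_after a k))"
    unfolding G_def by (simp add: algebra_simps)
  also have "\<dots> = dG a k"
    unfolding dG_def
    by (simp only: nb_expect_diff[OF s, symmetric] W_after_linearly_bounded
        linearly_bounded_overage linearly_bounded_shortage overage_increment shortage_increment
        W_after_increment)
  finally show ?thesis .
qed

lemma dG_mono: "dG a k \<le> dG (a + 1) k"
proof -
  have s: "shape k \<ge> 0" by (rule shape_nonneg)
  have ind: "nb_expect (shape k) p (\<lambda>z. if int z \<le> a then 1 else 0)
      \<le> nb_expect (shape k) p (\<lambda>z. if int z \<le> a + 1 then 1 else 0)"
    by (rule nb_expect_mono[OF s]) simp_all
  have tail: "nb_expect (shape k) p (\<lambda>z. if a < int z then -1 else 0)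
      \<le> nb_expect (shape k) p (\<lambda>z. if a + 1 < int z then -1 else 0)"
    by (rule nb_expect_mono[OF s]) simp_all
  have after: "nb_expect (shape k) p (dW_after a k) \<le> nb_expect (shape k) p (dW_after (a + 1) k)"
  proof (rule nb_expect_mono[OF s dW_after_linearly_bounded dW_after_linearly_bounded])
    show "dW_after a k z \<le> dW_after (a + 1) k z" for z
      unfolding dW_after_def
      by (rule nb_expect_mono[OF shape_others_nonneg dW_shifted_linearly_bounded
            dW_shifted_linearly_bounded]) (rule dW_mono, simp)
  qed
  show ?thesis
    unfolding dG_def
    using mult_left_mono[OF ind less_imp_le[OF ch_pos]] mult_left_mono[OF tail less_imp_le[OF cb_pos]] after
    by linarith
qed

text \<open>Raising \<open>k\<close> to \<open>k + 1\<close> raises both the shape of the others' demand and the state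
  argument of \<open>dW\<close>; both only lower \<open>dW\<close>.\<close>
lemma dW_after_Suc_le: "dW_after a (Suc k) z \<le> dW_after a k z"
proof -
  have "dW_after a (Suc k) z
      = nb_expect (shape_others k + real (N - 1)) p (\<lambda>n. dW (a - int z) (Suc k + z + n))"
    unfolding dW_after_def shape_others_Suc ..
  also have "\<dots> \<le> nb_expect (shape_others k + real (N - 1)) p (\<lambda>n. dW (a - int z) (k + z + n))"
    using shape_others_nonneg[of k]
    by (intro nb_expect_mono dW_shifted_linearly_bounded dW_antimono) auto
  also have "\<dots> \<le> nb_expect (shape_others k) p (\<lambda>n. dW (a - int z) (k + z + n))"
    by (intro nb_expect_shape_add_le shape_others_nonneg dW_shifted_linearly_bounded)
      (auto simp: antimono_def intro: dW_antimono)
  finally show ?thesis unfolding dW_after_def .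
qed

text \<open>A larger own demand \<open>z\<close> lowers the stock and raises the state, and \<open>dW\<close> is increasing
  in the stock and decreasing in the state.\<close>
lemma dW_after_antimono: "antimono (dW_after a k)"
proof (rule decseq_SucI)
  fix z
  show "dW_after a k (Suc z) \<le> dW_after a k z"
    unfolding dW_after_def
  proof (rule nb_expect_mono[OF shape_others_nonneg dW_shifted_linearly_bounded dW_shifted_linearly_bounded])
    fix n
    have "dW (a - int (Suc z)) (k + Suc z + n) \<le> dW (a - int (Suc z)) (k + z + n)"
      by (rule dW_antimono) simp
    also have "\<dots> \<le> dW (a - int z) (k + z + n)" by (rule dW_mono) simp
    finally show "dW (a - int (Suc z)) (k + Suc z + n) \<le> dW (a - int z) (k + z + n)" .
  qed
qed

lemma dG_Suc_le: "dG a (Suc k) \<le> dG a k"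
proof -
  have s: "shape k \<ge> 0" "shape (Suc k) \<ge> 0" by (rule shape_nonneg)+
  have ind: "nb_expect (shape (Suc k)) p (\<lambda>z. if int z \<le> a then 1 else 0)
      \<le> nb_expect (shape k) p (\<lambda>z. if int z \<le> a then 1 else 0)"
    unfolding shape_Suc by (rule nb_expect_shape_Suc_le[OF s(1)]) (auto simp: antimono_def)
  have tail: "nb_expect (shape (Suc k)) p (\<lambda>z. if a < int z then -1 else 0)
      \<le> nb_expect (shape k) p (\<lambda>z. if a < int z then -1 else 0)"
    unfolding shape_Suc by (rule nb_expect_shape_Suc_le[OF s(1)]) (auto simp: antimono_def)
  have after: "nb_expect (shape (Suc k)) p (dW_after a (Suc k)) \<le> nb_expect (shape k) p (dW_after a k)"
  proof -
    have "nb_expect (shape (Suc k)) p (dW_after a (Suc k)) \<le> nb_expect (shape (Suc k)) p (dW_after a k)"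
      by (rule nb_expect_mono[OF s(2) dW_after_linearly_bounded dW_after_linearly_bounded dW_after_Suc_le])
    also have "\<dots> \<le> nb_expect (shape k) p (dW_after a k)"
      unfolding shape_Suc
      by (rule nb_expect_shape_Suc_le[OF s(1) dW_after_antimono dW_after_linearly_bounded])
    finally show ?thesis .
  qed
  show ?thesis
    unfolding dG_def
    using mult_left_mono[OF ind less_imp_le[OF ch_pos]] mult_left_mono[OF tail less_imp_le[OF cb_pos]] after
    by linarith
qed

lemma dG_le: "dG a k \<le> cv + ch + D"
proof -
  have s: "shape k \<ge> 0" by (rule shape_nonneg)
  have ind: "nb_expect (shape k) p (\<lambda>z. if int z \<le> a then 1 else 0) \<le> 1"
    by (rule nb_expect_le_const[OF s]) simp_all
  have tail: "nb_expect (shape k) p (\<lambda>z. if a < int z then -1 else 0) \<le> 0"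
    by (rule nb_expect_le_const[OF s]) simp_all
  have after: "nb_expect (shape k) p (dW_after a k) \<le> D"
    by (rule nb_expect_le_const[OF s dW_after_linearly_bounded dW_after_le])
  show ?thesis
    unfolding dG_def
    using mult_left_mono[OF ind less_imp_le[OF ch_pos]] mult_left_mono[OF tail less_imp_le[OF cb_pos]] after
    by linarith
qed

text \<open>For large order-up-to levels \<open>a\<close> the backorder probability is small by Markov's
  inequality, so the holding term \<open>ch\<close> dominates.\<close>
lemma dG_eventually_nonneg: "\<exists>a\<ge>x. 0 \<le> dG a k"
proof -
  have s: "shape k \<ge> 0" by (rule shape_nonneg)
  define M where "M = shape k * (1 - p) / p"
  have M: "M \<ge> 0" unfolding M_def using s p_pos p_less_1 by simp
  define q where "q = (ch + cb) * M / ch"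
  have "0 \<le> q" unfolding q_def using M ch_pos cb_pos by simp
  define a where "a = max x \<lceil>q\<rceil>"
  have "x \<le> a" "\<lceil>q\<rceil> \<le> a" unfolding a_def by simp_all
  then have a: "a \<ge> x" "a \<ge> 0" "q \<le> real_of_int a"
    using \<open>0 \<le> q\<close> le_of_int_ceiling[of q] by linarith+
  have pos: "real_of_int a + 1 > 0" using a(2) by simp
  have ind: "nb_expect (shape k) p (\<lambda>z. if int z \<le> a then 1 else 0)
      = 1 + nb_expect (shape k) p (\<lambda>z. if a < int z then -1 else 0)"
  proof -
    have "(\<lambda>z. if int z \<le> a then 1 else 0 :: real) = (\<lambda>z. 1 + (if a < int z then -1 else 0))" by auto
    then show ?thesis by (simp add: nb_expect_add[OF s] nb_expect_const[OF s])
  qed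
  have tail: "- M / (real_of_int a + 1) \<le> nb_expect (shape k) p (\<lambda>z. if a < int z then -1 else 0)"
    unfolding M_def by (rule nb_expect_tail_bound[OF s a(2)])
  have after: "-cv \<le> nb_expect (shape k) p (dW_after a k)"
    by (rule nb_expect_ge_const[OF s dW_after_linearly_bounded dW_after_ge])
  have "(ch + cb) * (M / (real_of_int a + 1)) \<le> ch"
    using a(3) pos ch_pos cb_pos M unfolding q_def by (simp add: field_simps)
  moreover have "dG a k = cv + ch + (ch + cb) * nb_expect (shape k) p (\<lambda>z. if a < int z then -1 else 0)
      + nb_expect (shape k) p (dW_after a k)"
    unfolding dG_def ind by (simp add: algebra_simps)
  ultimately have "0 \<le> dG a k"
    using mult_left_mono[OF tail, of "ch + cb"] after ch_pos cb_pos by simp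
  then show ?thesis using a(1) by blast
qed

lemma G_minus_order_cost_nonneg:
  assumes "x \<le> a"
  shows "0 \<le> G a k - cv * real_of_int x"
proof -
  have s: "shape k \<ge> 0" by (rule shape_nonneg)
  have over: "0 \<le> nb_expect (shape k) p (\<lambda>z. max (real_of_int a - real z) 0)"
    by (rule nb_expect_ge_const[OF s]) simp_all
  have short: "0 \<le> nb_expect (shape k) p (\<lambda>z. max (real z - real_of_int a) 0)"
    by (rule nb_expect_ge_const[OF s]) simp_all
  have after: "0 \<le> nb_expect (shape k) p (W_after a k)"
    by (rule nb_expect_ge_const[OF s W_after_linearly_bounded W_after_nonneg])
  have "cv * real_of_int x \<le> cv * real_of_int a" using assms cv_pos by simp
  then show ?thesis
    unfolding G_def
    using mult_nonneg_nonneg[OF less_imp_le[OF ch_pos] over] mult_nonneg_nonneg[OF less_imp_le[OF cb_pos] short] after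
    by linarith
qed

lemma G_minus_order_cost_le:
  "G x k - cv * real_of_int x \<le> (A + (ch + cb + (real N - 1) * C + B + C) * odds * alpha)
     + (ch + cb + B) * \<bar>real_of_int x\<bar> + (C + (ch + cb + (real N - 1) * C + B + C) * odds) * real k"
proof -
  have s: "shape k \<ge> 0" by (rule shape_nonneg)
  have over: "nb_expect (shape k) p (\<lambda>z. max (real_of_int x - real z) 0)
      \<le> \<bar>real_of_int x\<bar> + 1 * (shape k * (1 - p) / p)"
    by (rule nb_expect_le_linear[OF s]) simp_all
  have short: "nb_expect (shape k) p (\<lambda>z. max (real z - real_of_int x) 0)
      \<le> \<bar>real_of_int x\<bar> + 1 * (shape k * (1 - p) / p)"
    by (rule nb_expect_le_linear[OF s]) simp_all
  have after: "nb_expect (shape k) p (W_after x k)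
      \<le> (A + B * \<bar>real_of_int x\<bar> + C * real k + C * shape_others k * odds) + (B + C) * (shape k * (1 - p) / p)"
    by (rule nb_expect_le_linear[OF s W_after_linearly_bounded W_after_le])
  have "G x k - cv * real_of_int x \<le> ch * (\<bar>real_of_int x\<bar> + shape k * odds)
      + cb * (\<bar>real_of_int x\<bar> + shape k * odds)
      + ((A + B * \<bar>real_of_int x\<bar> + C * real k + C * shape_others k * odds) + (B + C) * (shape k * odds))"
    using mult_left_mono[OF over less_imp_le[OF ch_pos]] mult_left_mono[OF short less_imp_le[OF cb_pos]] after
    unfolding G_def odds_def by simp
  also have "\<dots> = (A + (ch + cb + (real N - 1) * C + B + C) * odds * alpha)
     + (ch + cb + B) * \<bar>real_of_int x\<bar> + (C + (ch + cb + (real N - 1) * C + B + C) * odds) * real k"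
    unfolding shape_others_def shape_def by (simp add: algebra_simps)
  finally show ?thesis .
qed

lemma G_int_convex_coercive: "int_convex_coercive (\<lambda>a. G a k)"
proof
  show "G (a + 1) k - G a k \<le> G (a + 2) k - G (a + 1) k" for a
    using G_increment[of a k] G_increment[of "a + 1" k] dG_mono[of a k] by (simp add: add.assoc)
  show "\<exists>a\<ge>x. 0 \<le> G (a + 1) k - G a k" for x
    using dG_eventually_nonneg[of x k] by (simp add: G_increment)
qed

lemma V_eq: "V x k = G (int_convex_coercive.min_from (\<lambda>a. G a k) x) k - cv * real_of_int x"
  unfolding V_def by (rule int_convex_coercive.Inf_from_eq[OF G_int_convex_coercive])

lemma V_nonneg: "0 \<le> V x k"
  unfolding V_eq
  by (rule G_minus_order_cost_nonneg[OF int_convex_coercive.min_from_ge[OF G_int_convex_coercive]])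

lemma V_le: "V x k \<le> G x k - cv * real_of_int x"
  unfolding V_eq using int_convex_coercive.min_from_le[OF G_int_convex_coercive, of x x] by simp

lemma V_increment: "V (x + 1) k - V x k = max (dG x k) 0 - cv"
  unfolding V_eq
  using int_convex_coercive.min_from_increment[OF G_int_convex_coercive, of k x] G_increment[of x k]
  by (simp add: algebra_simps)

lemma dG_antimono: "antimono (dG a)"
  by (rule decseq_SucI) (rule dG_Suc_le)

lemma regular_value_V: "regular_value cv V"
  unfolding regular_value_def
proof (intro conjI allI)
  show "0 \<le> V x k" for x k by (rule V_nonneg)
  let ?c = "ch + cb + (real N - 1) * C + B + C"
  show "\<exists>A B C. A \<ge> 0 \<and> B \<ge> 0 \<and> C \<ge> 0 \<and> (\<forall>x k. V x k \<le> A + B * \<bar>real_of_int x\<bar> + C * real k)"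
  proof (intro exI conjI allI)
    show "V x k \<le> (A + ?c * odds * alpha) + (ch + cb + B) * \<bar>real_of_int x\<bar> + (C + ?c * odds) * real k"
      for x k
      using V_le[of x k] G_minus_order_cost_le[of x k] by linarith
  qed (use bounds_nonneg ch_pos cb_pos alpha_pos N_ge_1 odds_nonneg in auto)
  show "\<exists>D' \<ge> 0. \<forall>x k. -cv \<le> V (x + 1) k - V x k \<and> V (x + 1) k - V x k \<le> D'"
  proof (intro exI[of _ "ch + D"] conjI allI)
    show "-cv \<le> V (x + 1) k - V x k" for x k
      unfolding V_increment by simp
    show "V (x + 1) k - V x k \<le> ch + D" for x k
      unfolding V_increment using dG_le[of x k] cv_pos ch_pos bounds_nonneg by (simp add: max_def)
  qed (use ch_pos bounds_nonneg in simp)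
  show "V (x + 1) k - V x k \<le> V (x + 2) k - V (x + 1) k" for x k
    using V_increment[of x k] V_increment[of "x + 1" k] dG_mono[of x k] by (simp add: add.assoc)
  show "V (x + 1) (Suc k) - V x (Suc k) \<le> V (x + 1) k - V x k" for x k
    using dG_Suc_le[of x k] by (simp add: V_increment)
qed

lemma G_stage_eq_G:
  assumes "p_t N beta0 t = p"
  shows "G_stage N alpha beta0 cv ch cb t W = G"
  unfolding G_stage_def Let_def G_def W_after_def shape_def shape_others_def assms by (intro ext) simp

end

section \<open>Backward induction\<close>

lemma p_t_bounds: "beta0 > 0 \<Longrightarrow> 0 < p_t N beta0 t \<and> p_t N beta0 t < 1"
  unfolding p_t_def by (simp add: add_pos_nonneg divide_simps)

lemma bellman_step_regular_value:
  assumes "N \<ge> 1" "alpha > 0" "beta0 > 0" "cv > 0" "ch > 0" "cb > 0" "regular_value cv W"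
  obtains A B C D where "bellman_step (p_t N beta0 t) N alpha cv ch cb A B C D W"
proof -
  from assms(7) obtain A B C D where "A \<ge> 0" "B \<ge> 0" "C \<ge> 0" "D \<ge> 0"
    "\<And>x k. W x k \<le> A + B * \<bar>real_of_int x\<bar> + C * real k"
    "\<And>x k. -cv \<le> W (x + 1) k - W x k" "\<And>x k. W (x + 1) k - W x k \<le> D"
    unfolding regular_value_def by metis
  with assms show ?thesis
    by (intro that[of A B C D]) (unfold_locales, auto simp: regular_value_def p_t_bounds)
qed

lemma regular_value_V_rem:
  assumes "N \<ge> 1" "alpha0 > 0" "beta0 > 0" "cv > 0" "ch > 0" "cb > 0"
  shows "regular_value cv (V_rem N T alpha0 beta0 cv ch cb m)"
proof (induction m)
  case 0
  then show ?case using assms(4) by (auto simp: regular_value_def intro!: exI[of _ 0])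
next
  case (Suc m)
  then obtain A B C D where
    step: "bellman_step (p_t N beta0 (T - Suc m)) N alpha0 cv ch cb A B C D
      (V_rem N T alpha0 beta0 cv ch cb m)"
    using bellman_step_regular_value assms by blast
  have "V_rem N T alpha0 beta0 cv ch cb (Suc m)
      = bellman_step.V (p_t N beta0 (T - Suc m)) N alpha0 cv ch cb (V_rem N T alpha0 beta0 cv ch cb m)"
    by (simp add: fun_eq_iff bellman_step.V_def[OF step] bellman_step.G_stage_eq_G[OF step])
  then show ?case using bellman_step.regular_value_V[OF step] by simp
qed

theorem proposition6:
  fixes N T :: nat and alpha0 beta0 :: real and cv ch cb :: "nat \<Rightarrow> real"
  assumes "N \<ge> 1" and "T \<ge> 1" and "alpha0 > 0" and "beta0 > 0"
    and "\<And>i. i \<in> {1..N} \<Longrightarrow> cv i > 0 \<and> ch i > 0 \<and> cb i > 0 \<and> cb i > cv i"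
  shows "\<forall>t < T. \<forall>i \<in> {1..N}.
           (\<forall>a::int. antimono (\<lambda>k. Gfun N T alpha0 beta0 cv ch cb i t (a + 1) k
                                   - Gfun N T alpha0 beta0 cv ch cb i t a k))
         \<and> (\<forall>x::int. antimono (\<lambda>k. Vtil N T alpha0 beta0 cv ch cb i t (x + 1) k
                                   - Vtil N T alpha0 beta0 cv ch cb i t x k))"
proof (intro allI impI ballI conjI)
  fix t i a x
  assume i: "i \<in> {1..N}"
  have costs: "cv i > 0" "ch i > 0" "cb i > 0" using assms(5)[OF i] by auto
  note regular = regular_value_V_rem[OF assms(1,3,4) costs]
  have "Vtil N T alpha0 beta0 cv ch cb i (Suc t) = V_rem N T alpha0 beta0 (cv i) (ch i) (cb i) (T - Suc t)"
    by (simp add: fun_eq_iff Vtil_def)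
  moreover obtain A B C D where step: "bellman_step (p_t N beta0 t) N alpha0 (cv i) (ch i) (cb i) A B C D
      (V_rem N T alpha0 beta0 (cv i) (ch i) (cb i) (T - Suc t))"
    using bellman_step_regular_value[OF assms(1,3,4) costs regular] .
  ultimately show "antimono (\<lambda>k. Gfun N T alpha0 beta0 cv ch cb i t (a + 1) k
                                   - Gfun N T alpha0 beta0 cv ch cb i t a k)"
    unfolding Gfun_def
    by (simp add: bellman_step.G_stage_eq_G[OF step] bellman_step.G_increment[OF step]
        bellman_step.dG_antimono[OF step])
  show "antimono (\<lambda>k. Vtil N T alpha0 beta0 cv ch cb i t (x + 1) k
                     - Vtil N T alpha0 beta0 cv ch cb i t x k)"
    using regular[of T "T - t"] unfolding Vtil_def regular_value_def by (intro decseq_SucI) simp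
qed

end
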